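(* Assume: $g(x,u)\in[0,\infty]$ for all $x\in X$, $u\in U(x)$; $S^0\subset X$ and a stationary policy $\mu^0$ satisfy $f(x,\mu^0(x))\in S^0$ for all $x\in S^0$; for each $x\in X$, $\bar U(x)\subset U(x)$ is nonempty, with $\mu^0(x)\in\bar U(x)$ for all $x\in S^0$; and for every $J:X\to[0,\infty]$ and every $x\in X$ the infimum $\inf_{u\in\bar U(x)}\{g(x,u)+J(f(x,u))\}$ is attained. Let $\bar J_{S^0}(x)=J_{\mu^0}(x)$ for $x\in S^0$ and $\bar J_{S^0}(x)=\infty$ otherwise. Fix $\ell\ge1$, and let $\tilde J_{S^0}(x)$ be the optimal value of minimizing $\sum_{k=0}^{\ell-1}g(x_k,u_k)+\bar J_{S^0}(x_\ell)$ over $(u_0,\dots,u_{\ell-1})$ subject to $x_0=x$, $x_{k+1}=f(x_k,u_k)$, $u_k\in\bar U(x_k)$ for $k=0,\dots,\ell-1$, and let $\tilde\mu(x)=\tilde u_0$, the first control of a minimizing sequence $(\tilde u_0,\dots,\tilde u_{\ell-1})$ of this problem. Then $$J_{\tilde\mu}(x)\le\tilde J_{S^0}(x)\le\bar J_{S^0}(x)\quad\text{for all }x\in X.$$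
   Context: Deterministic infinite-horizon problem: arbitrary state space $X$ and control space $U$, dynamics $x_{k+1}=f(x_k,u_k)$ with $f:X\times U\to X$, nonempty control constraint sets $U(x)\subset U$. A stationary policy is a map $\mu:X\to U$ with $\mu(x)\in U(x)$ for all $x$; its cost function is $J_\mu(x_0)=\sum_{k=0}^\infty g(x_k,\mu(x_k))\in[0,\infty]$, where $x_{k+1}=f(x_k,\mu(x_k))$. Equivalently to the definition above, $\tilde J_{S^0}=J_\ell$ where $J_0=\bar J_{S^0}$, $J_{k+1}(x)=\min_{u\in\bar U(x)}\{g(x,u)+J_k(f(x,u))\}$, and $\tilde\mu(x)\in\arg\min_{u\in\bar U(x)}\{g(x,u)+J_{\ell-1}(f(x,u))\}$. *)

theory Defs
  imports "HOL-Analysis.Analysis"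
begin

definition pol_traj :: "('x \<Rightarrow> 'u \<Rightarrow> 'x) \<Rightarrow> ('x \<Rightarrow> 'u) \<Rightarrow> 'x \<Rightarrow> nat \<Rightarrow> 'x" where
  "pol_traj f mu x0 k = ((\<lambda>y. f y (mu y)) ^^ k) x0"

definition J_pol :: "('x \<Rightarrow> 'u \<Rightarrow> 'x) \<Rightarrow> ('x \<Rightarrow> 'u \<Rightarrow> ennreal) \<Rightarrow> ('x \<Rightarrow> 'u) \<Rightarrow> 'x \<Rightarrow> ennreal" where
  "J_pol f g mu x0 = (\<Sum>k. g (pol_traj f mu x0 k) (mu (pol_traj f mu x0 k)))"

fun ctraj :: "('x \<Rightarrow> 'u \<Rightarrow> 'x) \<Rightarrow> 'x \<Rightarrow> (nat \<Rightarrow> 'u) \<Rightarrow> nat \<Rightarrow> 'x" where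
  "ctraj f x0 us 0 = x0"
| "ctraj f x0 us (Suc k) = f (ctraj f x0 us k) (us k)"

definition Jbar :: "('x \<Rightarrow> 'u \<Rightarrow> 'x) \<Rightarrow> ('x \<Rightarrow> 'u \<Rightarrow> ennreal) \<Rightarrow> 'x set \<Rightarrow> ('x \<Rightarrow> 'u) \<Rightarrow> 'x \<Rightarrow> ennreal" where
  "Jbar f g S0 mu0 x = (if x \<in> S0 then J_pol f g mu0 x else \<infinity>)"

text \<open>Feasible control sequences for the l-step lookahead problem (only the first l controls matter).\<close>
definition feasible_seq :: "('x \<Rightarrow> 'u \<Rightarrow> 'x) \<Rightarrow> ('x \<Rightarrow> 'u set) \<Rightarrow> nat \<Rightarrow> 'x \<Rightarrow> (nat \<Rightarrow> 'u) \<Rightarrow> bool" where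
  "feasible_seq f Ubar l x us = (\<forall>k<l. us k \<in> Ubar (ctraj f x us k))"

definition la_cost :: "('x \<Rightarrow> 'u \<Rightarrow> 'x) \<Rightarrow> ('x \<Rightarrow> 'u \<Rightarrow> ennreal) \<Rightarrow> 'x set \<Rightarrow> ('x \<Rightarrow> 'u) \<Rightarrow> nat \<Rightarrow> 'x \<Rightarrow> (nat \<Rightarrow> 'u) \<Rightarrow> ennreal" where
  "la_cost f g S0 mu0 l x us =
     (\<Sum>k<l. g (ctraj f x us k) (us k)) + Jbar f g S0 mu0 (ctraj f x us l)"

definition Jtilde :: "('x \<Rightarrow> 'u \<Rightarrow> 'x) \<Rightarrow> ('x \<Rightarrow> 'u \<Rightarrow> ennreal) \<Rightarrow> ('x \<Rightarrow> 'u set) \<Rightarrow> 'x set \<Rightarrow> ('x \<Rightarrow> 'u) \<Rightarrow> nat \<Rightarrow> 'x \<Rightarrow> ennreal" where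
  "Jtilde f g Ubar S0 mu0 l x =
     (INF us \<in> {us. feasible_seq f Ubar l x us}. la_cost f g S0 mu0 l x us)"

end

theory Submission
  imports Defs
begin

text \<open>The lookahead value \<open>Jtilde\<close> satisfies the Bellman inequality
  \<open>g x (mut x) + Jtilde (f x (mut x)) \<le> Jtilde x\<close> along the lookahead policy: dropping the first
  control of an optimal sequence and appending the base policy \<open>mu0\<close> at the end (possible
  because \<open>S0\<close> is invariant under \<open>mu0\<close>) gives a feasible sequence from the successor state whose
  cost, plus the first stage cost, is at most the original cost. Iterating this inequality bounds the
  cost of \<open>mut\<close> by \<open>Jtilde\<close>. The bound \<open>Jtilde \<le> Jbar\<close> follows by using \<open>mu0\<close> itself as the
  control sequence.\<close>

lemma pol_traj_0 [simp]: "pol_traj f mu x 0 = x"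
  by (simp add: pol_traj_def)

lemma pol_traj_add: "pol_traj f mu x (j + n) = pol_traj f mu (pol_traj f mu x n) j"
  by (simp add: pol_traj_def funpow_add)

lemma pol_traj_Suc: "pol_traj f mu x (Suc k) = pol_traj f mu (f x (mu x)) k"
  using pol_traj_add[of f mu x k 1] by (simp add: pol_traj_def)

lemma pol_traj_invariant:
  assumes "\<forall>y\<in>S. f y (mu y) \<in> S" and "x \<in> S"
  shows "pol_traj f mu x k \<in> S"
  using assms(2) by (induction k arbitrary: x) (simp_all add: pol_traj_Suc assms(1))

lemma J_pol_split:
  "J_pol f g mu x = (\<Sum>k<n. g (pol_traj f mu x k) (mu (pol_traj f mu x k)))
     + J_pol f g mu (pol_traj f mu x n)"
  unfolding J_pol_def
  by (subst suminf_offset[OF summableI, of _ n]) (simp add: pol_traj_add add.commute)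

lemma J_pol_step: "J_pol f g mu x = g x (mu x) + J_pol f g mu (f x (mu x))"
  using J_pol_split[of f g mu x 1] by (simp add: pol_traj_def)

lemma J_pol_le_of_Bellman_ineq:
  fixes J :: "'x \<Rightarrow> ennreal"
  assumes bellman: "\<And>y. g y (mu y) + J (f y (mu y)) \<le> J y"
  shows "J_pol f g mu x \<le> J x"
proof -
  have partial: "(\<Sum>k<n. g (pol_traj f mu x k) (mu (pol_traj f mu x k)))
      + J (pol_traj f mu x n) \<le> J x" for n
  proof (induction n arbitrary: x)
    case 0
    then show ?case by simp
  next
    case (Suc n)
    let ?y = "f x (mu x)"
    have "(\<Sum>k<Suc n. g (pol_traj f mu x k) (mu (pol_traj f mu x k))) + J (pol_traj f mu x (Suc n))
        = g x (mu x) + ((\<Sum>k<n. g (pol_traj f mu ?y k) (mu (pol_traj f mu ?y k)))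
            + J (pol_traj f mu ?y n))"
      by (simp add: sum.lessThan_Suc_shift pol_traj_Suc add.assoc del: sum.lessThan_Suc)
    also have "\<dots> \<le> g x (mu x) + J ?y"
      by (rule add_left_mono) (rule Suc.IH)
    also have "\<dots> \<le> J x"
      by (rule bellman)
    finally show ?case .
  qed
  show ?thesis
    unfolding J_pol_def
    by (rule suminf_le_const[OF summableI])
      (rule order_trans[OF add_increasing2[OF zero_le order_refl] partial])
qed

lemma ctraj_pol_traj: "ctraj f x (\<lambda>k. mu (pol_traj f mu x k)) k = pol_traj f mu x k"
  by (induction k) (simp_all add: pol_traj_def)

lemma Jtilde_le_la_cost:
  "feasible_seq f Ubar l x us \<Longrightarrow> Jtilde f g Ubar S0 mu0 l x \<le> la_cost f g S0 mu0 l x us"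
  unfolding Jtilde_def by (rule INF_lower) simp

lemma Jtilde_le_Jbar:
  assumes S0_inv: "\<forall>x\<in>S0. f x (mu0 x) \<in> S0"
    and mu0_Ubar: "\<forall>x\<in>S0. mu0 x \<in> Ubar x"
  shows "Jtilde f g Ubar S0 mu0 l x \<le> Jbar f g S0 mu0 x"
proof (cases "x \<in> S0")
  case False
  then show ?thesis by (simp add: Jbar_def)
next
  case True
  define us where "us = (\<lambda>k. mu0 (pol_traj f mu0 x k))"
  have traj: "ctraj f x us k = pol_traj f mu0 x k" for k
    unfolding us_def by (rule ctraj_pol_traj)
  have in_S0: "pol_traj f mu0 x k \<in> S0" for k
    using S0_inv True by (rule pol_traj_invariant)
  have "feasible_seq f Ubar l x us"
    unfolding feasible_seq_def traj by (simp add: us_def in_S0 mu0_Ubar)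
  then have "Jtilde f g Ubar S0 mu0 l x \<le> la_cost f g S0 mu0 l x us"
    by (rule Jtilde_le_la_cost)
  also have "\<dots> = (\<Sum>k<l. g (pol_traj f mu0 x k) (mu0 (pol_traj f mu0 x k)))
      + J_pol f g mu0 (pol_traj f mu0 x l)"
    unfolding la_cost_def traj unfolding Jbar_def us_def using in_S0 by simp
  also have "\<dots> = Jbar f g S0 mu0 x"
    using True by (simp add: Jbar_def J_pol_split[symmetric])
  finally show ?thesis .
qed

definition shift_append :: "(nat \<Rightarrow> 'u) \<Rightarrow> nat \<Rightarrow> 'u \<Rightarrow> nat \<Rightarrow> 'u" where
  "shift_append us m u k = (if k < m then us (Suc k) else u)"

lemma ctraj_shift_append:
  "k \<le> m \<Longrightarrow> ctraj f (f x (us 0)) (shift_append us m u) k = ctraj f x us (Suc k)"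
  by (induction k) (simp_all add: shift_append_def)

lemma feasible_seq_shift_append:
  assumes "feasible_seq f Ubar (Suc m) x us"
    and "u \<in> Ubar (ctraj f x us (Suc m))"
  shows "feasible_seq f Ubar (Suc m) (f x (us 0)) (shift_append us m u)"
  unfolding feasible_seq_def
proof (intro allI impI)
  fix k assume "k < Suc m"
  then consider "k < m" | "k = m" by linarith
  then show "shift_append us m u k \<in> Ubar (ctraj f (f x (us 0)) (shift_append us m u) k)"
  proof cases
    case 1
    then show ?thesis
      using assms(1)[unfolded feasible_seq_def, rule_format, of "Suc k"] ctraj_shift_append[of k m f x us u]
      by (simp add: shift_append_def)
  next
    case 2
    then show ?thesis
      using assms(2) ctraj_shift_append[of m m f x us u] by (simp add: shift_append_def)
  qed
qed

lemma la_cost_shift_append: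
  assumes S0_inv: "\<forall>x\<in>S0. f x (mu0 x) \<in> S0"
    and end_in_S0: "ctraj f x us (Suc m) \<in> S0"
  defines "xl \<equiv> ctraj f x us (Suc m)"
  shows "g x (us 0) + la_cost f g S0 mu0 (Suc m) (f x (us 0)) (shift_append us m (mu0 xl))
      = la_cost f g S0 mu0 (Suc m) x us"
proof -
  let ?us' = "shift_append us m (mu0 xl)" and ?y = "f x (us 0)"
  have traj: "ctraj f ?y ?us' k = ctraj f x us (Suc k)" if "k \<le> m" for k
    using that by (rule ctraj_shift_append)
  have stages: "(\<Sum>k<Suc m. g (ctraj f ?y ?us' k) (?us' k))
      = (\<Sum>k<m. g (ctraj f x us (Suc k)) (us (Suc k))) + g xl (mu0 xl)"
    using traj by (simp add: shift_append_def xl_def)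
  have terminal: "Jbar f g S0 mu0 (ctraj f ?y ?us' (Suc m)) = J_pol f g mu0 (f xl (mu0 xl))"
    using traj[of m] S0_inv end_in_S0 by (simp add: Jbar_def shift_append_def xl_def)
  have "g x (us 0) + la_cost f g S0 mu0 (Suc m) ?y ?us'
      = g x (us 0) + ((\<Sum>k<m. g (ctraj f x us (Suc k)) (us (Suc k)))
          + (g xl (mu0 xl) + J_pol f g mu0 (f xl (mu0 xl))))"
    unfolding la_cost_def stages terminal by (simp add: add.assoc)
  also have "\<dots> = la_cost f g S0 mu0 (Suc m) x us"
    using end_in_S0
    by (simp add: la_cost_def Jbar_def xl_def J_pol_step[symmetric] sum.lessThan_Suc_shift add.assoc
        del: sum.lessThan_Suc)
  finally show ?thesis .
qed

lemma stage_cost_plus_Jtilde_le_la_cost: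
  assumes S0_inv: "\<forall>x\<in>S0. f x (mu0 x) \<in> S0"
    and mu0_Ubar: "\<forall>x\<in>S0. mu0 x \<in> Ubar x"
    and feasible: "feasible_seq f Ubar (Suc m) x us"
  shows "g x (us 0) + Jtilde f g Ubar S0 mu0 (Suc m) (f x (us 0)) \<le> la_cost f g S0 mu0 (Suc m) x us"
proof (cases "ctraj f x us (Suc m) \<in> S0")
  case False
  then show ?thesis by (simp add: la_cost_def Jbar_def)
next
  case True
  let ?us' = "shift_append us m (mu0 (ctraj f x us (Suc m)))"
  have "feasible_seq f Ubar (Suc m) (f x (us 0)) ?us'"
    using feasible mu0_Ubar True by (intro feasible_seq_shift_append) auto
  then have "g x (us 0) + Jtilde f g Ubar S0 mu0 (Suc m) (f x (us 0))
      \<le> g x (us 0) + la_cost f g S0 mu0 (Suc m) (f x (us 0)) ?us'"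
    by (intro add_left_mono Jtilde_le_la_cost)
  also have "\<dots> = la_cost f g S0 mu0 (Suc m) x us"
    using S0_inv True by (rule la_cost_shift_append)
  finally show ?thesis .
qed

theorem proposition5:
  fixes f :: "'x \<Rightarrow> 'u \<Rightarrow> 'x" and g :: "'x \<Rightarrow> 'u \<Rightarrow> ennreal"
    and U Ubar :: "'x \<Rightarrow> 'u set" and S0 :: "'x set"
    and mu0 mut :: "'x \<Rightarrow> 'u" and l :: nat
  assumes U_ne: "\<forall>x. U x \<noteq> {}"
    and mu0_pol: "\<forall>x. mu0 x \<in> U x"
    and S0_inv: "\<forall>x\<in>S0. f x (mu0 x) \<in> S0"
    and Ubar_sub: "\<forall>x. Ubar x \<subseteq> U x"
    and Ubar_ne: "\<forall>x. Ubar x \<noteq> {}"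
    and mu0_Ubar: "\<forall>x\<in>S0. mu0 x \<in> Ubar x"
    and attained: "\<forall>(J :: 'x \<Rightarrow> ennreal) x. \<exists>u\<in>Ubar x.
         g x u + J (f x u) = (INF v\<in>Ubar x. g x v + J (f x v))"
    and l_pos: "l \<ge> 1"
    and mut_def: "\<forall>x. \<exists>us. feasible_seq f Ubar l x us
         \<and> la_cost f g S0 mu0 l x us = Jtilde f g Ubar S0 mu0 l x
         \<and> mut x = us 0"
  shows "\<forall>x. J_pol f g mut x \<le> Jtilde f g Ubar S0 mu0 l x
           \<and> Jtilde f g Ubar S0 mu0 l x \<le> Jbar f g S0 mu0 x"
proof -
  \<comment> \<open>Attainment is only needed to make \<open>mut\<close> well defined, which \<open>mut_def\<close> already provides.\<close>
  obtain m where l: "l = Suc m"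
    using l_pos by (cases l) auto
  have "g x (mut x) + Jtilde f g Ubar S0 mu0 l (f x (mut x)) \<le> Jtilde f g Ubar S0 mu0 l x" for x
  proof -
    obtain us where feasible: "feasible_seq f Ubar l x us"
      and optimal: "la_cost f g S0 mu0 l x us = Jtilde f g Ubar S0 mu0 l x" and "mut x = us 0"
      using mut_def by blast
    have "g x (us 0) + Jtilde f g Ubar S0 mu0 l (f x (us 0)) \<le> la_cost f g S0 mu0 l x us"
      unfolding l using S0_inv mu0_Ubar feasible[unfolded l] by (rule stage_cost_plus_Jtilde_le_la_cost)
    then show ?thesis
      using optimal \<open>mut x = us 0\<close> by simp
  qed
  then have "J_pol f g mut x \<le> Jtilde f g Ubar S0 mu0 l x" for x
    by (rule J_pol_le_of_Bellman_ineq)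
  moreover have "Jtilde f g Ubar S0 mu0 l x \<le> Jbar f g S0 mu0 x" for x
    using S0_inv mu0_Ubar by (rule Jtilde_le_Jbar)
  ultimately show ?thesis by blast
qed

end
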